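(* Let $\mathcal{P}$ be a finite nonempty set and $\mathcal{N}$ a finite set of stochastic trees. If there exists an LPTS with $k$ states that is consistent with $\mathcal{P}$ and $\mathcal{N}$, then there is a consistent partition of $S_\mathcal{P}$ with at most $2^k$ classes.
   Context: An LPTS is a tuple $\langle S,s^0,\alpha,\tau\rangle$ with finite state set $S$, start state $s^0$, finite action set $\alpha$, finite $\tau\subseteq S\times\alpha\times\mathrm{Dist}(S)$, where $\mathrm{Dist}(S)$ is the set of discrete probability distributions over $S$ (rational probabilities); write $s\xrightarrow{a}\mu$. A stochastic tree is an LPTS whose start state is in the support of no transition's distribution and every other state is in the support of exactly one transition's distribution. Strong simulation: for $\mu_1\in\mathrm{Dist}(S_1)$, $\mu_2\in\mathrm{Dist}(S_2)$, $R\subseteq S_1\times S_2$, $\mu_1\sqsubseteq_R\mu_2$ iff there is $w:S_1\times S_2\to\mathbb{Q}\cap[0,1]$ with $\sum_{s_2}w(s_1,s_2)=\mu_1(s_1)$, $\sum_{s_1}w(s_1,s_2)=\mu_2(s_2)$ and $w(s_1,s_2)>0\Rightarrow s_1Rs_2$; $R$ is a strong simulation iff $s_1Rs_2$ and $s_1\xrightarrow{a}\mu_1$ imply some $s_2\xrightarrow{a}\mu_2$ with $\mu_1\sqsubseteq_R\mu_2$; $L_1\preceq L_2$ iff a strong simulation relates the start states. An LPTS $L$ is consistent with $\mathcal{P},\mathcal{N}$ iff $P\preceq L$ for all $P\in\mathcal{P}$ and $N\not\preceq L$ for all $N\in\mathcal{N}$. $S_\mathcal{P}$ is the (disjoint)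 union of the state sets of the trees in $\mathcal{P}$. For a partition $\Pi$ of $S_\mathcal{P}$ with classes $E_\Pi$ and class $[s]$ of $s$, in which all start states of trees in $\mathcal{P}$ lie in one class, the quotient $\mathcal{P}/\Pi$ is the LPTS with states $E_\Pi$, start state that common class, actions $\bigcup_{P\in\mathcal{P}}\alpha_P$, and a transition $e\xrightarrow{a}\mu$ iff some $P\in\mathcal{P}$ has $s\xrightarrow{a}\mu_p$ with $[s]=e$ and $\mu(e')=\sum_{s'\in e'}\mu_p(s')$ for all $e'$. Such a partition $\Pi$ is consistent iff $N\not\preceq\mathcal{P}/\Pi$ for every $N\in\mathcal{N}$; its size is the number of classes. *)

theory Defs
  imports Complex_Main "HOL-Library.Disjoint_Sets"
begin

record ('s, 'a) lpts =
  states :: "'s set"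
  start  :: 's
  acts   :: "'a set"
  trans  :: "('s \<times> 'a \<times> ('s \<Rightarrow> rat)) set"

definition Dist :: "'s set \<Rightarrow> ('s \<Rightarrow> rat) set" where
  "Dist S = {\<mu>. (\<forall>s. 0 \<le> \<mu> s) \<and> (\<forall>s. s \<notin> S \<longrightarrow> \<mu> s = 0) \<and> sum \<mu> S = 1}"

definition is_lpts :: "('s, 'a) lpts \<Rightarrow> bool" where
  "is_lpts L \<longleftrightarrow> finite (states L) \<and> start L \<in> states L \<and> finite (acts L)
     \<and> finite (trans L)
     \<and> trans L \<subseteq> states L \<times> acts L \<times> Dist (states L)"

definition is_stochastic_tree :: "('s, 'a) lpts \<Rightarrow> bool" where
  "is_stochastic_tree L \<longleftrightarrow> is_lpts L
     \<and> (\<forall>(s, a, \<mu>) \<in> trans L. \<mu> (start L) = 0)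
     \<and> (\<forall>t \<in> states L - {start L}. \<exists>!tr. tr \<in> trans L \<and> (snd (snd tr)) t > 0)"

definition lift_rel ::
  "('s1 \<times> 's2) set \<Rightarrow> 's1 set \<Rightarrow> 's2 set \<Rightarrow> ('s1 \<Rightarrow> rat) \<Rightarrow> ('s2 \<Rightarrow> rat) \<Rightarrow> bool" where
  "lift_rel R S1 S2 \<mu>1 \<mu>2 \<longleftrightarrow> (\<exists>w :: 's1 \<Rightarrow> 's2 \<Rightarrow> rat.
      (\<forall>x y. 0 \<le> w x y \<and> w x y \<le> 1)
    \<and> (\<forall>s1 \<in> S1. (\<Sum>s2 \<in> S2. w s1 s2) = \<mu>1 s1)
    \<and> (\<forall>s2 \<in> S2. (\<Sum>s1 \<in> S1. w s1 s2) = \<mu>2 s2)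
    \<and> (\<forall>x y. w x y > 0 \<longrightarrow> (x, y) \<in> R))"

definition strong_simulation :: "('s1 \<times> 's2) set \<Rightarrow> ('s1, 'a) lpts \<Rightarrow> ('s2, 'a) lpts \<Rightarrow> bool" where
  "strong_simulation R L1 L2 \<longleftrightarrow> R \<subseteq> states L1 \<times> states L2
     \<and> (\<forall>s1 s2 a \<mu>1. (s1, s2) \<in> R \<and> (s1, a, \<mu>1) \<in> trans L1 \<longrightarrow>
           (\<exists>\<mu>2. (s2, a, \<mu>2) \<in> trans L2 \<and> lift_rel R (states L1) (states L2) \<mu>1 \<mu>2))"

definition simulated_by :: "('s1, 'a) lpts \<Rightarrow> ('s2, 'a) lpts \<Rightarrow> bool" (infix "\<preceq>\<^sub>s" 50) where
  "L1 \<preceq>\<^sub>s L2 \<longleftrightarrow> (\<exists>R. strong_simulation R L1 L2 \<and> (start L1, start L2) \<in> R)"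

definition consistent :: "('p, 'a) lpts set \<Rightarrow> ('n, 'a) lpts set \<Rightarrow> ('s, 'a) lpts \<Rightarrow> bool" where
  "consistent \<P> \<N> L \<longleftrightarrow> (\<forall>P \<in> \<P>. P \<preceq>\<^sub>s L) \<and> (\<forall>N \<in> \<N>. \<not> N \<preceq>\<^sub>s L)"

text \<open>Disjoint union of the state sets of the trees in \<P>: a state is tagged with its tree.\<close>
definition S_P :: "('s, 'a) lpts set \<Rightarrow> (('s, 'a) lpts \<times> 's) set" where
  "S_P \<P> = {(P, s). P \<in> \<P> \<and> s \<in> states P}"

definition starts_in_one_class ::
  "('s, 'a) lpts set \<Rightarrow> (('s, 'a) lpts \<times> 's) set set \<Rightarrow> bool" where
  "starts_in_one_class \<P> Q \<longleftrightarrow> (\<exists>e \<in> Q. \<forall>P \<in> \<P>. (P, start P) \<in> e)"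

definition quotient ::
  "('s, 'a) lpts set \<Rightarrow> (('s, 'a) lpts \<times> 's) set set \<Rightarrow> ((('s, 'a) lpts \<times> 's) set, 'a) lpts" where
  "quotient \<P> Q = \<lparr>
     states = Q,
     start = (THE e. e \<in> Q \<and> (\<forall>P \<in> \<P>. (P, start P) \<in> e)),
     acts = (\<Union>P \<in> \<P>. acts P),
     trans = {(e, a, \<mu>) | e a \<mu>. \<exists>P \<in> \<P>. \<exists>s \<mu>p.
                 (s, a, \<mu>p) \<in> trans P \<and> e \<in> Q \<and> (P, s) \<in> e
               \<and> \<mu> = (\<lambda>e'. if e' \<in> Q then (\<Sum>s' \<in> {s' \<in> states P. (P, s') \<in> e'}. \<mu>p s') else 0)} \<rparr>"

definition consistent_partition ::
  "('s, 'a) lpts set \<Rightarrow> ('n, 'a) lpts set \<Rightarrow> (('s, 'a) lpts \<times> 's) set set \<Rightarrow> bool" where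
  "consistent_partition \<P> \<N> Q \<longleftrightarrow> partition_on (S_P \<P>) Q \<and> starts_in_one_class \<P> Q
     \<and> (\<forall>N \<in> \<N>. \<not> N \<preceq>\<^sub>s quotient \<P> Q)"

end

theory Submission
  imports Defs
begin

text \<open>Label every state of a tree in \<open>\<P>\<close> by the set of states of \<open>L\<close> that simulate it, except
  that all start states receive the common label of states simulating every start state.
  Grouping states by label gives at most \<open>2^k\<close> classes, and relating a class to the states
  in its label is a strong simulation of the quotient by \<open>L\<close>: a state in the support of a
  distribution is never a start state, so its label is exactly its set of simulators.
  Since simulation composes, an \<open>N\<close> simulated by the quotient would be simulated by \<open>L\<close>.\<close>

lemma Dist_le_1:
  assumes "\<mu> \<in> Dist S" "finite S"
  shows "\<mu> x \<le> 1"
proof (cases "x \<in> S")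
  case True
  then have "\<mu> x \<le> sum \<mu> S" using assms by (intro member_le_sum) (auto simp: Dist_def)
  then show ?thesis using assms by (simp add: Dist_def)
qed (use assms in \<open>simp add: Dist_def\<close>)

lemma is_lpts_trans_Dist:
  "is_lpts L \<Longrightarrow> (s, a, \<mu>) \<in> trans L \<Longrightarrow> \<mu> \<in> Dist (states L)"
  by (auto simp: is_lpts_def)

lemma lift_rel_mono:
  "lift_rel R S1 S2 \<mu>1 \<mu>2 \<Longrightarrow> R \<subseteq> R' \<Longrightarrow> lift_rel R' S1 S2 \<mu>1 \<mu>2"
  unfolding lift_rel_def by blast

lemma lift_rel_relcomp:
  assumes fin: "finite SA" "finite SB" "finite SC"
    and l1: "lift_rel R1 SA SB \<mu>1 \<mu>2" and l2: "lift_rel R2 SB SC \<mu>2 \<mu>3"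
    and le1: "\<And>x. \<mu>1 x \<le> 1"
  shows "lift_rel (R1 O R2) SA SC \<mu>1 \<mu>3"
proof -
  obtain w1 where w1: "\<forall>x y. 0 \<le> w1 x y \<and> w1 x y \<le> 1"
    "\<forall>x \<in> SA. (\<Sum>y \<in> SB. w1 x y) = \<mu>1 x" "\<forall>y \<in> SB. (\<Sum>x \<in> SA. w1 x y) = \<mu>2 y"
    "\<forall>x y. w1 x y > 0 \<longrightarrow> (x, y) \<in> R1" using l1 unfolding lift_rel_def by blast
  obtain w2 where w2: "\<forall>x y. 0 \<le> w2 x y \<and> w2 x y \<le> 1"
    "\<forall>y \<in> SB. (\<Sum>z \<in> SC. w2 y z) = \<mu>2 y" "\<forall>z \<in> SC. (\<Sum>y \<in> SB. w2 y z) = \<mu>3 z"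
    "\<forall>y z. w2 y z > 0 \<longrightarrow> (y, z) \<in> R2" using l2 unfolding lift_rel_def by blast
  \<comment> \<open>Glue the two couplings along their common marginal \<open>\<mu>2\<close>; a division by \<open>\<mu>2 y = 0\<close>
    is harmless because both couplings vanish on such a \<open>y\<close>.\<close>
  define w where "w x z = (if x \<in> SA \<and> z \<in> SC then (\<Sum>y\<in>SB. w1 x y * w2 y z / \<mu>2 y) else 0)"
    for x z
  have w1_zero: "w1 x y = 0" if "x \<in> SA" "y \<in> SB" "\<mu>2 y = 0" for x y
    using that w1(1,3) sum_nonneg_eq_0_iff[OF fin(1), of "\<lambda>x. w1 x y"] by auto
  have w2_zero: "w2 y z = 0" if "z \<in> SC" "y \<in> SB" "\<mu>2 y = 0" for y z
    using that w2(1,2) sum_nonneg_eq_0_iff[OF fin(3), of "\<lambda>z. w2 y z"] by auto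
  have \<mu>2_nonneg: "0 \<le> \<mu>2 y" if "y \<in> SB" for y
    using that w1(1,3) by (metis sum_nonneg)
  have w_nonneg: "0 \<le> w x z" for x z
    unfolding w_def using w1(1) w2(1) \<mu>2_nonneg by (auto intro!: sum_nonneg divide_nonneg_nonneg)
  have w_row: "(\<Sum>z\<in>SC. w x z) = \<mu>1 x" if "x \<in> SA" for x
  proof -
    have "(\<Sum>z\<in>SC. w x z) = (\<Sum>y\<in>SB. w1 x y * (\<Sum>z\<in>SC. w2 y z) / \<mu>2 y)"
      using that by (simp add: w_def sum.swap[of _ SC] sum_divide_distrib sum_distrib_left)
    also have "\<dots> = (\<Sum>y\<in>SB. w1 x y)"
      using w2(2) w1_zero[OF that] by (intro sum.cong) auto
    finally show ?thesis using w1(2) that by simp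
  qed
  have w_col: "(\<Sum>x\<in>SA. w x z) = \<mu>3 z" if "z \<in> SC" for z
  proof -
    have "(\<Sum>x\<in>SA. w x z) = (\<Sum>y\<in>SB. (\<Sum>x\<in>SA. w1 x y) * w2 y z / \<mu>2 y)"
      using that by (simp add: w_def sum.swap[of _ SA] sum_divide_distrib sum_distrib_right)
    also have "\<dots> = (\<Sum>y\<in>SB. w2 y z)"
      using w1(3) w2_zero[OF that] by (intro sum.cong) auto
    finally show ?thesis using w2(3) that by simp
  qed
  have w_le_1: "w x z \<le> 1" for x z
  proof (cases "x \<in> SA \<and> z \<in> SC")
    case True
    then have "w x z \<le> (\<Sum>z\<in>SC. w x z)" using fin w_nonneg by (intro member_le_sum) auto
    then show ?thesis using w_row True le1[of x] by simp
  qed (auto simp: w_def)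
  have w_supp: "(x, z) \<in> R1 O R2" if "w x z > 0" for x z
  proof -
    have "x \<in> SA" "z \<in> SC" using that by (auto simp: w_def split: if_splits)
    then have "0 < (\<Sum>y\<in>SB. w1 x y * w2 y z / \<mu>2 y)" using that by (simp add: w_def)
    then obtain y where "y \<in> SB" "w1 x y * w2 y z / \<mu>2 y > 0"
      by (meson linorder_not_le sum_nonpos)
    then have "w1 x y \<noteq> 0" "w2 y z \<noteq> 0" by auto
    then have "w1 x y > 0" "w2 y z > 0" using w1(1) w2(1) by (auto simp: order_le_less)
    then show ?thesis using w1(4) w2(4) by blast
  qed
  show ?thesis unfolding lift_rel_def
    using w_nonneg w_le_1 w_row w_col w_supp by blast
qed

lemma lift_rel_restrict_support:
  assumes "lift_rel R S1 S2 \<mu>1 \<mu>2" "finite S2"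
  shows "lift_rel {(x, y) \<in> R. x \<in> S1 \<and> y \<in> S2 \<and> 0 < \<mu>1 x} S1 S2 \<mu>1 \<mu>2"
proof -
  obtain w where w: "\<forall>x y. 0 \<le> w x y \<and> w x y \<le> 1"
    "\<forall>x \<in> S1. (\<Sum>y \<in> S2. w x y) = \<mu>1 x" "\<forall>y \<in> S2. (\<Sum>x \<in> S1. w x y) = \<mu>2 y"
    "\<forall>x y. w x y > 0 \<longrightarrow> (x, y) \<in> R" using assms(1) unfolding lift_rel_def by blast
  define w' where "w' x y = (if x \<in> S1 \<and> y \<in> S2 then w x y else 0)" for x y
  have "0 < \<mu>1 x" if "x \<in> S1" "y \<in> S2" "0 < w x y" for x y
  proof -
    have "w x y \<le> (\<Sum>y\<in>S2. w x y)" using that assms(2) w(1) by (intro member_le_sum) auto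
    then show ?thesis using that w(2) by simp
  qed
  then show ?thesis unfolding lift_rel_def
    by (intro exI[of _ w']) (use w in \<open>auto simp: w'_def\<close>)
qed

lemma lift_rel_image:
  assumes l: "lift_rel R S1 S2 \<mu>1 \<mu>2" and fin: "finite S1" "finite T"
    and f: "f ` S1 \<subseteq> T" and le1: "\<And>y. \<mu>2 y \<le> 1"
    and \<nu>: "\<And>t. t \<in> T \<Longrightarrow> \<nu> t = (\<Sum>x\<in>{x\<in>S1. f x = t}. \<mu>1 x)"
  shows "lift_rel {(f x, y) | x y. (x, y) \<in> R \<and> x \<in> S1} T S2 \<nu> \<mu>2"
proof -
  obtain w where w: "\<forall>x y. 0 \<le> w x y \<and> w x y \<le> 1"
    "\<forall>x \<in> S1. (\<Sum>y \<in> S2. w x y) = \<mu>1 x" "\<forall>y \<in> S2. (\<Sum>x \<in> S1. w x y) = \<mu>2 y"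
    "\<forall>x y. w x y > 0 \<longrightarrow> (x, y) \<in> R" using l unfolding lift_rel_def by blast
  define w' where "w' t y = (if t \<in> T \<and> y \<in> S2 then (\<Sum>x\<in>{x\<in>S1. f x = t}. w x y) else 0)"
    for t y
  have w'_le_1: "w' t y \<le> 1" for t y
  proof (cases "t \<in> T \<and> y \<in> S2")
    case True
    have "(\<Sum>x\<in>{x\<in>S1. f x = t}. w x y) \<le> (\<Sum>x\<in>S1. w x y)"
      using fin w(1) by (intro sum_mono2) auto
    then show ?thesis using True w(3) le1[of y] by (simp add: w'_def)
  qed (auto simp: w'_def)
  have w'_row: "(\<Sum>y\<in>S2. w' t y) = \<nu> t" if "t \<in> T" for t
  proof -
    have "(\<Sum>y\<in>S2. w' t y) = (\<Sum>x\<in>{x\<in>S1. f x = t}. \<Sum>y\<in>S2. w x y)"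
      using that by (simp add: w'_def sum.swap[of _ S2])
    also have "\<dots> = (\<Sum>x\<in>{x\<in>S1. f x = t}. \<mu>1 x)" using w(2) by (intro sum.cong) auto
    finally show ?thesis using \<nu>[OF that] by simp
  qed
  have w'_col: "(\<Sum>t\<in>T. w' t y) = \<mu>2 y" if "y \<in> S2" for y
    using that w(3) sum.group[OF fin f, of "\<lambda>x. w x y"] by (simp add: w'_def)
  have w'_supp: "(t, y) \<in> {(f x, y) | x y. (x, y) \<in> R \<and> x \<in> S1}" if "w' t y > 0" for t y
  proof -
    have "y \<in> S2" "(\<Sum>x\<in>{x\<in>S1. f x = t}. w x y) > 0"
      using that by (auto simp: w'_def split: if_splits)
    then obtain x where "x \<in> S1" "f x = t" "w x y > 0"
      using sum_nonpos[of "{x\<in>S1. f x = t}" "\<lambda>x. w x y"] by force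
    then show ?thesis using w(4) by blast
  qed
  show ?thesis unfolding lift_rel_def
    using w(1) w'_le_1 w'_row w'_col w'_supp
    by (intro exI[of _ w']) (auto simp: w'_def intro!: sum_nonneg)
qed

lemma strong_simulationD:
  "strong_simulation R L1 L2 \<Longrightarrow> (s1, s2) \<in> R \<Longrightarrow> (s1, a, \<mu>1) \<in> trans L1 \<Longrightarrow>
    \<exists>\<mu>2. (s2, a, \<mu>2) \<in> trans L2 \<and> lift_rel R (states L1) (states L2) \<mu>1 \<mu>2"
  unfolding strong_simulation_def by blast

lemma strong_simulation_relcomp:
  assumes s1: "strong_simulation R1 A B" and s2: "strong_simulation R2 B C"
    and A: "is_lpts A" and fin: "finite (states B)" "finite (states C)"
  shows "strong_simulation (R1 O R2) A C"
  unfolding strong_simulation_def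
proof (intro conjI allI impI)
  show "R1 O R2 \<subseteq> states A \<times> states C"
    using s1 s2 by (auto simp: strong_simulation_def)
next
  fix x z a \<mu>1
  assume "(x, z) \<in> R1 O R2 \<and> (x, a, \<mu>1) \<in> trans A"
  then obtain y where xy: "(x, y) \<in> R1" and yz: "(y, z) \<in> R2" and tr: "(x, a, \<mu>1) \<in> trans A"
    by blast
  obtain \<mu>2 where m2: "(y, a, \<mu>2) \<in> trans B" "lift_rel R1 (states A) (states B) \<mu>1 \<mu>2"
    using strong_simulationD[OF s1 xy tr] by blast
  obtain \<mu>3 where m3: "(z, a, \<mu>3) \<in> trans C" "lift_rel R2 (states B) (states C) \<mu>2 \<mu>3"
    using strong_simulationD[OF s2 yz m2(1)] by blast
  have finA: "finite (states A)" using A by (simp add: is_lpts_def)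
  have "\<mu>1 x' \<le> 1" for x' using is_lpts_trans_Dist[OF A tr] finA by (rule Dist_le_1)
  then show "\<exists>\<mu>3. (z, a, \<mu>3) \<in> trans C \<and> lift_rel (R1 O R2) (states A) (states C) \<mu>1 \<mu>3"
    using m3 lift_rel_relcomp[OF finA fin m2(2) m3(2)] by blast
qed

lemma simulated_by_trans:
  assumes "A \<preceq>\<^sub>s B" "B \<preceq>\<^sub>s C" "is_lpts A" "finite (states B)" "finite (states C)"
  shows "A \<preceq>\<^sub>s C"
  using assms strong_simulation_relcomp unfolding simulated_by_def by blast

definition fibres :: "('a \<Rightarrow> 'b) \<Rightarrow> 'a set \<Rightarrow> 'a set set" where
  "fibres f A = (\<lambda>v. {x \<in> A. f x = v}) ` f ` A"

lemma partition_on_fibres: "partition_on A (fibres f A)"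
  by (rule partition_onI) (auto simp: fibres_def disjnt_def)

lemma fibres_memD: "e \<in> fibres f A \<Longrightarrow> x \<in> e \<Longrightarrow> e = {y \<in> A. f y = f x}"
  by (auto simp: fibres_def)

lemma finite_fibres: "finite (f ` A) \<Longrightarrow> finite (fibres f A)"
  by (simp add: fibres_def)

lemma card_fibres_le: "finite (f ` A) \<Longrightarrow> card (fibres f A) \<le> card (f ` A)"
  unfolding fibres_def by (rule card_image_le)

lemma partition_on_class_unique:
  "partition_on A Q \<Longrightarrow> e1 \<in> Q \<Longrightarrow> e2 \<in> Q \<Longrightarrow> x \<in> e1 \<Longrightarrow> x \<in> e2 \<Longrightarrow> e1 = e2"
  by (auto simp: partition_on_def disjoint_def)

lemma start_quotient:
  assumes Q: "partition_on (S_P \<P>) Q" "starts_in_one_class \<P> Q" and "\<P> \<noteq> {}"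
  shows "start (quotient \<P> Q) \<in> Q \<and> (\<forall>P \<in> \<P>. (P, start P) \<in> start (quotient \<P> Q))"
proof -
  obtain e where e: "e \<in> Q" "\<forall>P \<in> \<P>. (P, start P) \<in> e"
    using Q(2) by (auto simp: starts_in_one_class_def)
  obtain P0 where "P0 \<in> \<P>" using \<open>\<P> \<noteq> {}\<close> by blast
  then have "(THE e. e \<in> Q \<and> (\<forall>P \<in> \<P>. (P, start P) \<in> e)) = e"
    using e partition_on_class_unique[OF Q(1)] by (intro the_equality) blast+
  then show ?thesis using e by (simp add: quotient_def)
qed

definition simulating_states :: "('c, 'a) lpts \<Rightarrow> ('s, 'a) lpts \<times> 's \<Rightarrow> 'c set" where
  "simulating_states L x =
     {l \<in> states L. \<exists>R. strong_simulation R (fst x) L \<and> (snd x, l) \<in> R}"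

lemma simulating_states_subset: "simulating_states L x \<subseteq> states L"
  by (auto simp: simulating_states_def)

lemma lift_rel_quotient:
  assumes Q: "partition_on (S_P \<P>) Q" and P: "P \<in> \<P>" "is_lpts P" "finite Q"
    and l: "lift_rel R (states P) (states L) \<mu>p \<mu>2" "strong_simulation R P L"
    and fin: "finite (states L)" and le1: "\<And>l. \<mu>2 l \<le> 1"
  shows "lift_rel {(e, l). \<exists>x. e \<in> Q \<and> (P, x) \<in> e \<and> 0 < \<mu>p x \<and> l \<in> simulating_states L (P, x)}
           Q (states L) (\<lambda>e'. if e' \<in> Q then \<Sum>x \<in> {x \<in> states P. (P, x) \<in> e'}. \<mu>p x else 0) \<mu>2"
proof -
  have "\<forall>x \<in> states P. \<exists>e. e \<in> Q \<and> (P, x) \<in> e"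
    using P(1) partition_onD1[OF Q] by (auto simp: S_P_def)
  then obtain cls where cls: "\<And>x. x \<in> states P \<Longrightarrow> cls x \<in> Q \<and> (P, x) \<in> cls x"
    by metis
  have cls_iff: "(P, x) \<in> e \<longleftrightarrow> cls x = e" if "x \<in> states P" "e \<in> Q" for x e
    using that cls partition_on_class_unique[OF Q] by metis
  have "lift_rel {(cls x, l) | x l. (x, l) \<in> {(x, l) \<in> R. x \<in> states P \<and> l \<in> states L \<and> 0 < \<mu>p x}
      \<and> x \<in> states P} Q (states L) (\<lambda>e'. if e' \<in> Q then \<Sum>x \<in> {x \<in> states P. (P, x) \<in> e'}. \<mu>p x else 0) \<mu>2"
  proof (rule lift_rel_image[OF lift_rel_restrict_support[OF l(1) fin] _ P(3) _ le1])
    show "finite (states P)" using P(2) by (simp add: is_lpts_def)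
    show "cls ` states P \<subseteq> Q" using cls by blast
    show "(if e \<in> Q then \<Sum>x \<in> {x \<in> states P. (P, x) \<in> e}. \<mu>p x else 0)
        = (\<Sum>x \<in> {x \<in> states P. cls x = e}. \<mu>p x)" if "e \<in> Q" for e
      using that cls_iff by (auto intro!: sum.cong)
  qed
  then show ?thesis
    by (rule lift_rel_mono) (use cls l(2) in \<open>fastforce simp: simulating_states_def\<close>)
qed

lemma quotient_simulated_by:
  assumes Q: "partition_on (S_P \<P>) Q" "starts_in_one_class \<P> Q" "finite Q"
    and \<P>: "\<P> \<noteq> {}" "\<forall>P \<in> \<P>. is_lpts P" and L: "is_lpts L"
    and closed: "\<And>P s a \<mu>p x e l y. P \<in> \<P> \<Longrightarrow> (s, a, \<mu>p) \<in> trans P \<Longrightarrow> 0 < \<mu>p x \<Longrightarrow>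
       e \<in> Q \<Longrightarrow> (P, x) \<in> e \<Longrightarrow> l \<in> simulating_states L (P, x) \<Longrightarrow> y \<in> e \<Longrightarrow>
       l \<in> simulating_states L y"
    and start: "\<And>e y. e \<in> Q \<Longrightarrow> \<forall>P \<in> \<P>. (P, start P) \<in> e \<Longrightarrow> y \<in> e \<Longrightarrow>
       start L \<in> simulating_states L y"
  shows "quotient \<P> Q \<preceq>\<^sub>s L"
proof -
  define R where "R = {(e, l). e \<in> Q \<and> l \<in> states L \<and> (\<forall>y \<in> e. l \<in> simulating_states L y)}"
  have finL: "finite (states L)" using L by (simp add: is_lpts_def)
  have "strong_simulation R (quotient \<P> Q) L"
    unfolding strong_simulation_def
  proof (intro conjI allI impI)
    show "R \<subseteq> states (quotient \<P> Q) \<times> states L"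
      by (auto simp: R_def quotient_def)
  next
    fix e l a \<mu>
    assume "(e, l) \<in> R \<and> (e, a, \<mu>) \<in> trans (quotient \<P> Q)"
    then obtain P s \<mu>p where P: "P \<in> \<P>" "(s, a, \<mu>p) \<in> trans P" "(P, s) \<in> e"
      and \<mu>: "\<mu> = (\<lambda>e'. if e' \<in> Q then \<Sum>x \<in> {x \<in> states P. (P, x) \<in> e'}. \<mu>p x else 0)"
      and l: "l \<in> simulating_states L (P, s)"
      by (auto simp: R_def quotient_def)
    obtain R0 where R0: "strong_simulation R0 P L" "(s, l) \<in> R0"
      using l by (auto simp: simulating_states_def)
    obtain \<mu>2 where \<mu>2: "(l, a, \<mu>2) \<in> trans L" "lift_rel R0 (states P) (states L) \<mu>p \<mu>2"
      using strong_simulationD[OF R0 P(2)] by blast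
    have "\<mu>2 l' \<le> 1" for l' using is_lpts_trans_Dist[OF L \<mu>2(1)] finL by (rule Dist_le_1)
    then have lifted: "lift_rel {(e, l). \<exists>x. e \<in> Q \<and> (P, x) \<in> e \<and> 0 < \<mu>p x
        \<and> l \<in> simulating_states L (P, x)} Q (states L) \<mu> \<mu>2"
      unfolding \<mu> using lift_rel_quotient[OF Q(1) P(1) _ Q(3) \<mu>2(2) R0(1) finL] \<P>(2) P(1) by blast
    have "{(e, l). \<exists>x. e \<in> Q \<and> (P, x) \<in> e \<and> 0 < \<mu>p x
        \<and> l \<in> simulating_states L (P, x)} \<subseteq> R"
    proof clarify
      fix e' l' x
      assume that: "e' \<in> Q" "(P, x) \<in> e'" "0 < \<mu>p x" "l' \<in> simulating_states L (P, x)"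
      have "l' \<in> states L" using that(4) by (rule simulating_states_subset[THEN subsetD])
      moreover have "\<forall>y \<in> e'. l' \<in> simulating_states L y"
        using closed[OF P(1,2) that(3,1,2,4)] by blast
      ultimately show "(e', l') \<in> R" using that(1) by (simp add: R_def)
    qed
    with lifted have "lift_rel R Q (states L) \<mu> \<mu>2" by (rule lift_rel_mono)
    then show "\<exists>\<mu>2. (l, a, \<mu>2) \<in> trans L \<and>
        lift_rel R (states (quotient \<P> Q)) (states L) \<mu> \<mu>2"
      using \<mu>2(1) by (auto simp: quotient_def)
  qed
  moreover have "(start (quotient \<P> Q), start L) \<in> R"
    using start_quotient[OF Q(1,2) \<P>(1)] start L by (auto simp: R_def is_lpts_def)
  ultimately show ?thesis unfolding simulated_by_def by blast
qed

definition simulation_label ::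
  "('s, 'a) lpts set \<Rightarrow> ('c, 'a) lpts \<Rightarrow> ('s, 'a) lpts \<times> 's \<Rightarrow> 'c set" where
  "simulation_label \<P> L x =
     (if snd x = start (fst x) then \<Inter>P \<in> \<P>. simulating_states L (P, start P)
      else simulating_states L x)"

lemma simulation_label_subset:
  "fst x \<in> \<P> \<Longrightarrow> simulation_label \<P> L x \<subseteq> simulating_states L x"
  by (cases x) (auto simp: simulation_label_def)

lemma simulation_label_subset_states:
  assumes "\<P> \<noteq> {}"
  shows "simulation_label \<P> L x \<subseteq> states L"
proof -
  obtain P where "P \<in> \<P>" using assms by blast
  then have "(\<Inter>P \<in> \<P>. simulating_states L (P, start P)) \<subseteq> simulating_states L (P, start P)"
    by (rule INT_lower)
  also have "\<dots> \<subseteq> states L" by (rule simulating_states_subset)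
  finally have "(\<Inter>P \<in> \<P>. simulating_states L (P, start P)) \<subseteq> states L" .
  then show ?thesis unfolding simulation_label_def by (simp add: simulating_states_subset)
qed

context
  fixes \<P> :: "('s, 'a) lpts set" and L :: "('c, 'a) lpts"
  assumes \<P>: "\<P> \<noteq> {}" "\<forall>P \<in> \<P>. is_stochastic_tree P" and L: "is_lpts L"
begin

abbreviation label_partition :: "(('s, 'a) lpts \<times> 's) set set" where
  "label_partition \<equiv> fibres (simulation_label \<P> L) (S_P \<P>)"

lemma labels_subset_Pow: "simulation_label \<P> L ` S_P \<P> \<subseteq> Pow (states L)"
  using simulation_label_subset_states[OF \<P>(1), of L] by auto

lemma finite_labels: "finite (simulation_label \<P> L ` S_P \<P>)"
  using labels_subset_Pow L by (auto simp: is_lpts_def intro: finite_subset)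

lemma finite_label_partition: "finite label_partition"
  by (rule finite_fibres[OF finite_labels])

lemma card_label_partition_le: "card label_partition \<le> 2 ^ card (states L)"
proof -
  have "card label_partition \<le> card (simulation_label \<P> L ` S_P \<P>)"
    by (rule card_fibres_le[OF finite_labels])
  also have "\<dots> \<le> card (Pow (states L))"
    using labels_subset_Pow L by (intro card_mono) (auto simp: is_lpts_def)
  finally show ?thesis using L by (simp add: card_Pow is_lpts_def)
qed

lemma starts_in_one_class_label_partition: "starts_in_one_class \<P> label_partition"
proof -
  obtain P0 where P0: "P0 \<in> \<P>" using \<P>(1) by blast
  have start_mem: "(P, start P) \<in> S_P \<P>" if "P \<in> \<P>" for P
    using that \<P>(2) by (simp add: S_P_def is_stochastic_tree_def is_lpts_def)
  let ?e = "{y \<in> S_P \<P>. simulation_label \<P> L y = simulation_label \<P> L (P0, start P0)}"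
  have "?e \<in> label_partition" using start_mem[OF P0] by (auto simp: fibres_def)
  moreover have "\<forall>P \<in> \<P>. (P, start P) \<in> ?e"
    using start_mem by (simp add: simulation_label_def)
  ultimately show ?thesis unfolding starts_in_one_class_def by blast
qed

lemma label_partition_closed:
  assumes P: "P \<in> \<P>" "(s, a, \<mu>p) \<in> trans P" and "0 < \<mu>p x"
    and e: "e \<in> label_partition" "(P, x) \<in> e"
    and l: "l \<in> simulating_states L (P, x)" and "y \<in> e"
  shows "l \<in> simulating_states L y"
proof -
  have "\<forall>(s, a, \<mu>) \<in> trans P. \<mu> (start P) = 0"
    using \<P>(2) P(1) unfolding is_stochastic_tree_def by blast
  then have "x \<noteq> start P" using P(2) \<open>0 < \<mu>p x\<close> by auto
  then have "simulation_label \<P> L (P, x) = simulating_states L (P, x)"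
    by (simp add: simulation_label_def)
  moreover have y: "y \<in> S_P \<P>" "simulation_label \<P> L y = simulation_label \<P> L (P, x)"
    using fibres_memD[OF e] \<open>y \<in> e\<close> by blast+
  moreover have "fst y \<in> \<P>" using y(1) by (cases y) (simp add: S_P_def)
  ultimately show ?thesis using l simulation_label_subset[of y \<P> L] by blast
qed

lemma label_partition_start:
  assumes "\<forall>P \<in> \<P>. P \<preceq>\<^sub>s L"
    and e: "e \<in> label_partition" "\<forall>P \<in> \<P>. (P, start P) \<in> e" and "y \<in> e"
  shows "start L \<in> simulating_states L y"
proof -
  obtain P0 where P0: "P0 \<in> \<P>" using \<P>(1) by blast
  have "start L \<in> simulating_states L (P, start P)" if "P \<in> \<P>" for P
    using assms(1) that L by (auto simp: simulating_states_def simulated_by_def is_lpts_def)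
  then have "start L \<in> simulation_label \<P> L (P0, start P0)"
    by (simp add: simulation_label_def)
  moreover have y: "y \<in> S_P \<P>" "simulation_label \<P> L y = simulation_label \<P> L (P0, start P0)"
    using fibres_memD[OF e(1)] e(2) P0 \<open>y \<in> e\<close> by blast+
  moreover have "fst y \<in> \<P>" using y(1) by (cases y) (simp add: S_P_def)
  ultimately show ?thesis using simulation_label_subset[of y \<P> L] by blast
qed

lemma quotient_label_partition_simulated_by:
  assumes "\<forall>P \<in> \<P>. P \<preceq>\<^sub>s L"
  shows "quotient \<P> label_partition \<preceq>\<^sub>s L"
proof (rule quotient_simulated_by[OF partition_on_fibres starts_in_one_class_label_partition
      finite_label_partition \<P>(1) _ L label_partition_closed label_partition_start[OF assms]])
  show "\<forall>P \<in> \<P>. is_lpts P" using \<P>(2) by (simp add: is_stochastic_tree_def)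
qed

end

theorem corollary1:
  fixes \<P> :: "('s, 'a) lpts set" and \<N> :: "('n, 'a) lpts set"
    and L :: "('c, 'a) lpts" and k :: nat
  assumes "finite \<P>" and "\<P> \<noteq> {}" and "finite \<N>"
    and "\<forall>P \<in> \<P>. is_stochastic_tree P"
    and "\<forall>N \<in> \<N>. is_stochastic_tree N"
    and "is_lpts L" and "card (states L) = k"
    and "consistent \<P> \<N> L"
  shows "\<exists>Q. consistent_partition \<P> \<N> Q \<and> card Q \<le> 2 ^ k"
proof (intro exI conjI)
  note label_facts = assms(2,4,6)
  have quotient_sim: "quotient \<P> (label_partition \<P> L) \<preceq>\<^sub>s L"
    using quotient_label_partition_simulated_by[OF label_facts] assms(8)
    by (simp add: consistent_def)
  have "\<not> N \<preceq>\<^sub>s quotient \<P> (label_partition \<P> L)" if "N \<in> \<N>" for N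
  proof
    assume "N \<preceq>\<^sub>s quotient \<P> (label_partition \<P> L)"
    moreover have "is_lpts N" using that assms(5) by (simp add: is_stochastic_tree_def)
    moreover have "finite (states (quotient \<P> (label_partition \<P> L)))"
      using finite_label_partition[OF label_facts] by (simp add: quotient_def)
    moreover have "finite (states L)" using assms(6) by (simp add: is_lpts_def)
    ultimately have "N \<preceq>\<^sub>s L" using simulated_by_trans quotient_sim by blast
    then show False using assms(8) that by (simp add: consistent_def)
  qed
  then show "consistent_partition \<P> \<N> (label_partition \<P> L)"
    using partition_on_fibres starts_in_one_class_label_partition[OF label_facts]
    by (simp add: consistent_partition_def)
  show "card (label_partition \<P> L) \<le> 2 ^ k"
    using card_label_partition_le[OF label_facts] assms(7) by simp
qed

end
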